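(* Let $G$ be a connected graph. Then: (i) $\mu_t(G)\ge|\mathcal{S}(G)|$; (ii) if $\mu_t(G)=|\mathcal{S}(G)|$, then $\mu_t(G)=n(G)-|\mathcal{P}(G)|$; (iii) if $\mu_t(G)=n(G)-|\mathcal{P}(G)|$, then $\mu_t(G)=|\mathcal{C}(G)|$.
   Context: All graphs are finite, simple and undirected; $n(G)$ denotes the order of $G$ and $N_G[v]$ the closed neighborhood of $v$. Let $G$ be a connected graph and $X\subseteq V(G)$. Two vertices $x,y\in V(G)$ are $X$-visible if there exists a shortest $x,y$-path in $G$ none of whose internal vertices (i.e., vertices other than $x$ and $y$) belongs to $X$. The set $X$ is a total mutual-visibility set of $G$ if every two vertices of $G$ are $X$-visible (the empty set is allowed). The total mutual-visibility number $\mu_t(G)$ is the maximum cardinality of a total mutual-visibility set of $G$; a $\mu_t(G)$-set is a total mutual-visibility set of cardinality $\mu_t(G)$. $\mathcal{C}(G)$ is the set of vertices belonging to every $\mu_t(G)$-set. A vertex is simplicial if its neighbors induce a complete graph; $\mathcal{S}(G)$ is the set of simplicial vertices of $G$. $\mathcal{P}(G)$ is the set of vertices $v$ for which there exist two distinct vertices $u,w\in V(G)$ with $N_G[u]\cap N_G[w]=\{v\}$ (equivalently, $v$ is the middle vertex of a convex, i.e. geodesically closed, induced path $P_3$). *)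

theory Defs
  imports Main
begin

definition graph :: "'a set \<Rightarrow> ('a \<Rightarrow> 'a \<Rightarrow> bool) \<Rightarrow> bool" where
  "graph V E \<longleftrightarrow> finite V \<and> (\<forall>x y. E x y \<longrightarrow> E y x) \<and> (\<forall>x. \<not> E x x)
     \<and> (\<forall>x y. E x y \<longrightarrow> x \<in> V \<and> y \<in> V)"

definition walk :: "'a set \<Rightarrow> ('a \<Rightarrow> 'a \<Rightarrow> bool) \<Rightarrow> 'a list \<Rightarrow> 'a \<Rightarrow> 'a \<Rightarrow> bool" where
  "walk V E p x y \<longleftrightarrow> p \<noteq> [] \<and> hd p = x \<and> last p = y \<and> set p \<subseteq> V
     \<and> (\<forall>i. Suc i < length p \<longrightarrow> E (p ! i) (p ! Suc i))"

definition connected_graph :: "'a set \<Rightarrow> ('a \<Rightarrow> 'a \<Rightarrow> bool) \<Rightarrow> bool" where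
  "connected_graph V E \<longleftrightarrow> graph V E \<and> V \<noteq> {} \<and> (\<forall>x\<in>V. \<forall>y\<in>V. \<exists>p. walk V E p x y)"

definition dist :: "'a set \<Rightarrow> ('a \<Rightarrow> 'a \<Rightarrow> bool) \<Rightarrow> 'a \<Rightarrow> 'a \<Rightarrow> nat" where
  "dist V E x y = (LEAST n. \<exists>p. walk V E p x y \<and> length p = Suc n)"

definition shortest_path :: "'a set \<Rightarrow> ('a \<Rightarrow> 'a \<Rightarrow> bool) \<Rightarrow> 'a list \<Rightarrow> 'a \<Rightarrow> 'a \<Rightarrow> bool" where
  "shortest_path V E p x y \<longleftrightarrow> walk V E p x y \<and> length p = Suc (dist V E x y)"

definition internal :: "'a list \<Rightarrow> 'a set" where
  "internal p = set (butlast (tl p))"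

definition visible :: "'a set \<Rightarrow> ('a \<Rightarrow> 'a \<Rightarrow> bool) \<Rightarrow> 'a set \<Rightarrow> 'a \<Rightarrow> 'a \<Rightarrow> bool" where
  "visible V E X x y \<longleftrightarrow> (\<exists>p. shortest_path V E p x y \<and> internal p \<inter> X = {})"

definition total_mv_set :: "'a set \<Rightarrow> ('a \<Rightarrow> 'a \<Rightarrow> bool) \<Rightarrow> 'a set \<Rightarrow> bool" where
  "total_mv_set V E X \<longleftrightarrow> X \<subseteq> V \<and> (\<forall>x\<in>V. \<forall>y\<in>V. visible V E X x y)"

definition mu_t :: "'a set \<Rightarrow> ('a \<Rightarrow> 'a \<Rightarrow> bool) \<Rightarrow> nat" where
  "mu_t V E = Max (card ` {X. total_mv_set V E X})"

definition mu_t_set :: "'a set \<Rightarrow> ('a \<Rightarrow> 'a \<Rightarrow> bool) \<Rightarrow> 'a set \<Rightarrow> bool" where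
  "mu_t_set V E X \<longleftrightarrow> total_mv_set V E X \<and> card X = mu_t V E"

definition core_set :: "'a set \<Rightarrow> ('a \<Rightarrow> 'a \<Rightarrow> bool) \<Rightarrow> 'a set" where
  "core_set V E = {v\<in>V. \<forall>X. mu_t_set V E X \<longrightarrow> v \<in> X}"

definition closed_nbh :: "'a set \<Rightarrow> ('a \<Rightarrow> 'a \<Rightarrow> bool) \<Rightarrow> 'a \<Rightarrow> 'a set" where
  "closed_nbh V E v = insert v {u\<in>V. E v u}"

definition simplicial :: "'a set \<Rightarrow> ('a \<Rightarrow> 'a \<Rightarrow> bool) \<Rightarrow> 'a \<Rightarrow> bool" where
  "simplicial V E v \<longleftrightarrow> (\<forall>u w. E v u \<and> E v w \<and> u \<noteq> w \<longrightarrow> E u w)"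

definition simplicial_set :: "'a set \<Rightarrow> ('a \<Rightarrow> 'a \<Rightarrow> bool) \<Rightarrow> 'a set" where
  "simplicial_set V E = {v\<in>V. simplicial V E v}"

definition P_set :: "'a set \<Rightarrow> ('a \<Rightarrow> 'a \<Rightarrow> bool) \<Rightarrow> 'a set" where
  "P_set V E = {v\<in>V. \<exists>u\<in>V. \<exists>w\<in>V. u \<noteq> w \<and> closed_nbh V E u \<inter> closed_nbh V E w = {v}}"

end

theory Submission
  imports Defs
begin

text \<open>Simplicial vertices are never internal to a shortest path, so \<open>\<S>(G)\<close> is a total
mutual-visibility set. A vertex \<open>v \<in> \<P>(G)\<close> is the middle of a convex \<open>P\<^sub>3\<close> \<open>u v w\<close>, hence
internal to every shortest \<open>u,w\<close>-path, so it lies in no total mutual-visibility set.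
For \<open>v \<notin> \<P>(G)\<close> the set \<open>\<S>(G) \<union> {v}\<close> is still one: if \<open>v\<close> is internal to a shortest
path with neighbours \<open>a,b\<close> there, then \<open>N[a] \<inter> N[b] \<noteq> {v}\<close> supplies another common
neighbour that can replace \<open>v\<close>. So all total mutual-visibility sets lie in \<open>V - \<P>(G)\<close>,
\<open>\<S>(G)\<close> can be maximum only if it equals \<open>V - \<P>(G)\<close>, and if \<open>V - \<P>(G)\<close> has maximum size
it is the unique \<open>\<mu>\<^sub>t\<close>-set.\<close>

lemma walk_take:
  assumes "walk V E p x y" "i < length p"
  shows "walk V E (take (Suc i) p) x (p ! i)"
proof -
  have "last (take (Suc i) p) = p ! i"
    using assms(2) by (subst last_conv_nth) (auto simp: min_def intro!: arg_cong[where f = "nth p"])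
  then show ?thesis
    using assms unfolding walk_def by (auto dest: in_set_takeD)
qed

lemma walk_drop:
  assumes "walk V E p x y" "j < length p"
  shows "walk V E (drop j p) (p ! j) y"
  using assms unfolding walk_def by (auto simp: hd_drop_conv_nth dest: in_set_dropD)

lemma walk_append_edge:
  assumes p: "walk V E p x a" and q: "walk V E q b y" and ab: "E a b"
  shows "walk V E (p @ q) x y"
proof -
  have "E ((p @ q) ! i) ((p @ q) ! Suc i)" if "Suc i < length (p @ q)" for i
  proof -
    consider "Suc i < length p" | "Suc i = length p" | "length p \<le> i" by linarith
    then show ?thesis
    proof cases
      case 1
      then show ?thesis using p by (simp add: nth_append walk_def)
    next
      case 2
      then have "p ! i = a" using p unfolding walk_def by (metis diff_Suc_1 last_conv_nth)
      moreover have "q ! 0 = b" using q by (auto simp: walk_def hd_conv_nth)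
      ultimately show ?thesis using 2 ab by (simp add: nth_append)
    next
      case 3
      then show ?thesis using q that by (auto simp: nth_append walk_def Suc_diff_le)
    qed
  qed
  then show ?thesis using p q by (auto simp: walk_def)
qed

lemma walk_append_tl:
  assumes p: "walk V E p x a" and q: "walk V E q a y"
  shows "walk V E (p @ tl q) x y"
proof (cases "tl q = []")
  case True
  with q have "q = [a]" "y = a" unfolding walk_def by (cases q; simp)+
  with p show ?thesis by simp
next
  case False
  then have long: "1 < length q" by (cases q) auto
  moreover have "q ! 0 = a" using q unfolding walk_def by (metis hd_conv_nth)
  ultimately have "E a (q ! 1)" using q unfolding walk_def by auto
  with walk_append_edge[OF p walk_drop[OF q long]] show ?thesis by (simp add: drop_Suc)
qed

lemma shortest_path_exists:
  assumes "connected_graph V E" "x \<in> V" "y \<in> V"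
  obtains p where "shortest_path V E p x y"
proof -
  obtain q where q: "walk V E q x y" using assms unfolding connected_graph_def by blast
  moreover have "length q = Suc (length q - 1)" using q by (cases q) (auto simp: walk_def)
  ultimately have "\<exists>n p. walk V E p x y \<and> length p = Suc n" by blast
  then have "\<exists>p. walk V E p x y \<and> length p = Suc (dist V E x y)"
    unfolding dist_def by (rule LeastI_ex)
  then show ?thesis using that unfolding shortest_path_def by blast
qed

lemma shortest_path_length_le:
  assumes "shortest_path V E p x y" "walk V E q x y"
  shows "length p \<le> length q"
proof -
  have q: "length q = Suc (length q - 1)" using assms(2) by (cases q) (auto simp: walk_def)
  have "dist V E x y \<le> length q - 1"
    unfolding dist_def by (rule Least_le) (use assms(2) q in blast)
  with assms(1) q show ?thesis unfolding shortest_path_def by linarith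
qed

lemma shortest_path_distinct:
  assumes sp: "shortest_path V E p x y"
  shows "distinct p"
proof (rule ccontr)
  assume "\<not> distinct p"
  then obtain i j where ij: "i < j" "j < length p" "p ! i = p ! j"
    by (metis distinct_conv_nth linorder_neqE_nat)
  have w: "walk V E p x y" using sp by (simp add: shortest_path_def)
  have "walk V E (take (Suc i) p @ tl (drop j p)) x y"
    using walk_append_tl[OF walk_take[OF w, of i]] walk_drop[OF w ij(2)] ij by auto
  from shortest_path_length_le[OF sp this] ij show False by auto
qed

lemma shortest_path_no_chord:
  assumes sp: "shortest_path V E p x y" and i: "Suc (Suc i) < length p"
  shows "\<not> E (p ! i) (p ! Suc (Suc i))"
proof
  assume e: "E (p ! i) (p ! Suc (Suc i))"
  have w: "walk V E p x y" using sp by (simp add: shortest_path_def)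
  have "walk V E (take (Suc i) p @ drop (Suc (Suc i)) p) x y"
    using walk_append_edge[OF walk_take[OF w, of i] walk_drop[OF w i] e] i by auto
  from shortest_path_length_le[OF sp this] i show False by auto
qed

lemma shortest_path_edge:
  "shortest_path V E p x y \<Longrightarrow> Suc i < length p \<Longrightarrow> E (p ! i) (p ! Suc i)"
  unfolding shortest_path_def walk_def by blast

lemma mem_internal_iff: "v \<in> internal p \<longleftrightarrow> (\<exists>k. 0 < k \<and> Suc k < length p \<and> p ! k = v)"
proof
  assume "v \<in> internal p"
  then obtain i where "i < length (butlast (tl p))" "butlast (tl p) ! i = v"
    unfolding internal_def by (auto simp: in_set_conv_nth)
  then show "\<exists>k. 0 < k \<and> Suc k < length p \<and> p ! k = v"
    by (intro exI[of _ "Suc i"]) (auto simp: nth_butlast nth_tl)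
next
  assume "\<exists>k. 0 < k \<and> Suc k < length p \<and> p ! k = v"
  then obtain i where "Suc (Suc i) < length p" "p ! Suc i = v" by (metis gr0_implies_Suc)
  then have "i < length (butlast (tl p))" "butlast (tl p) ! i = v"
    by (auto simp: nth_butlast nth_tl)
  then show "v \<in> internal p" unfolding internal_def by (metis nth_mem)
qed

lemma shortest_path_internal_vertex:
  assumes sp: "shortest_path V E p x y" and v: "v \<in> internal p"
  obtains i where "Suc (Suc i) < length p" "p ! Suc i = v"
    "E (p ! i) v" "E v (p ! Suc (Suc i))"
    "p ! i \<noteq> p ! Suc (Suc i)" "\<not> E (p ! i) (p ! Suc (Suc i))"
proof -
  obtain i where i: "Suc (Suc i) < length p" "p ! Suc i = v"
    using v unfolding mem_internal_iff by (metis gr0_implies_Suc)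
  moreover have "p ! i \<noteq> p ! Suc (Suc i)"
    using shortest_path_distinct[OF sp] i by (simp add: nth_eq_iff_index_eq)
  ultimately show ?thesis
    using that shortest_path_edge[OF sp] shortest_path_no_chord[OF sp] by auto
qed

lemma shortest_path_update:
  assumes sp: "shortest_path V E p x y" and k: "Suc (Suc i) < length p"
    and c: "c \<in> V" "E (p ! i) c" "E c (p ! Suc (Suc i))"
  shows "shortest_path V E (p[Suc i := c]) x y"
proof -
  let ?q = "p[Suc i := c]"
  have w: "walk V E p x y" using sp by (simp add: shortest_path_def)
  have "hd ?q = x" using w k by (cases p) (auto simp: walk_def)
  moreover have "last ?q = y" using w k by (auto simp: walk_def last_list_update)
  moreover have "set ?q \<subseteq> V" using w c set_update_subset_insert[of p "Suc i" c]
    unfolding walk_def by blast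
  moreover have "E (?q ! j) (?q ! Suc j)" if "Suc j < length ?q" for j
    using that c shortest_path_edge[OF sp, of j] by (cases "j = i"; cases "j = Suc i") auto
  ultimately show ?thesis using w sp unfolding shortest_path_def walk_def by auto
qed

lemma simplicial_not_internal:
  assumes g: "graph V E" and sp: "shortest_path V E p x y" and s: "simplicial V E v"
  shows "v \<notin> internal p"
proof
  assume "v \<in> internal p"
  then obtain i where "E (p ! i) v" "E v (p ! Suc (Suc i))"
    "p ! i \<noteq> p ! Suc (Suc i)" "\<not> E (p ! i) (p ! Suc (Suc i))"
    using shortest_path_internal_vertex[OF sp] by metis
  with g s show False unfolding graph_def simplicial_def by blast
qed

lemma total_mv_setI:
  assumes "connected_graph V E" "X \<subseteq> V" and "\<And>p x y. shortest_path V E p x y \<Longrightarrow>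
    \<exists>q. shortest_path V E q x y \<and> internal q \<inter> X = {}"
  shows "total_mv_set V E X"
  using assms shortest_path_exists[OF assms(1)] unfolding total_mv_set_def visible_def by metis

lemma total_mv_set_simplicial_set:
  assumes c: "connected_graph V E"
  shows "total_mv_set V E (simplicial_set V E)"
  using simplicial_not_internal[of V E] c
  by (intro total_mv_setI) (auto simp: simplicial_set_def connected_graph_def)

lemma P_set_convex_P3:
  assumes g: "graph V E" and v: "v \<in> P_set V E"
  obtains u w where "u \<in> V" "w \<in> V" "u \<noteq> w" "E u v" "E v w" "\<not> E u w"
    "\<And>c. E u c \<Longrightarrow> E c w \<Longrightarrow> c = v"
proof -
  have sym: "\<And>a b. E a b \<Longrightarrow> E b a" and inV: "\<And>a b. E a b \<Longrightarrow> a \<in> V \<and> b \<in> V"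
    using g unfolding graph_def by blast+
  obtain u w where uw: "u \<in> V" "w \<in> V" "u \<noteq> w"
    and meet: "closed_nbh V E u \<inter> closed_nbh V E w = {v}"
    using v unfolding P_set_def by blast
  have "\<not> E u w"
  proof
    assume "E u w"
    then have "u \<in> closed_nbh V E u \<inter> closed_nbh V E w" "w \<in> closed_nbh V E u \<inter> closed_nbh V E w"
      using sym inV by (auto simp: closed_nbh_def)
    with meet uw show False by auto
  qed
  moreover have "v \<in> closed_nbh V E u" "v \<in> closed_nbh V E w" using meet by auto
  ultimately have "E u v" "E v w" using uw sym by (auto simp: closed_nbh_def)
  moreover have "c = v" if "E u c" "E c w" for c
    using that meet sym inV by (auto simp: closed_nbh_def)
  ultimately show ?thesis using that uw \<open>\<not> E u w\<close> by blast
qed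

lemma P_set_disjoint_total_mv_set:
  assumes c: "connected_graph V E" and X: "total_mv_set V E X" and v: "v \<in> P_set V E"
  shows "v \<notin> X"
proof
  assume vX: "v \<in> X"
  have g: "graph V E" using c by (simp add: connected_graph_def)
  obtain u w where uw: "u \<in> V" "w \<in> V" "u \<noteq> w" "E u v" "E v w" "\<not> E u w"
    and unique: "\<And>c. E u c \<Longrightarrow> E c w \<Longrightarrow> c = v"
    using P_set_convex_P3[OF g v] by metis
  obtain p where sp: "shortest_path V E p u w" and avoid: "internal p \<inter> X = {}"
    using X uw unfolding total_mv_set_def visible_def by blast
  have "v \<in> V" using g uw(4) unfolding graph_def by blast
  then have "walk V E [u, v, w] u w"
    using uw unfolding walk_def by (simp add: less_Suc_eq)
  from shortest_path_length_le[OF sp this] have len: "length p \<le> 3" by simp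
  have w: "walk V E p u w" using sp by (simp add: shortest_path_def)
  then have ends: "p ! 0 = u" "p ! (length p - 1) = w" "p \<noteq> []"
    unfolding walk_def by (auto simp: hd_conv_nth last_conv_nth)
  consider "length p = 1" | "length p = 2" | "length p = 3"
    using len ends(3) length_greater_0_conv[of p] by linarith
  then show False
  proof cases
    case 1
    with ends uw(3) show False by simp
  next
    case 2
    with ends uw(6) shortest_path_edge[OF sp, of 0] show False by simp
  next
    case 3
    then have "E u (p ! 1)" "E (p ! 1) w"
      using ends shortest_path_edge[OF sp, of 0] shortest_path_edge[OF sp, of 1]
      by (simp_all add: numeral_eq_Suc)
    then have "p ! 1 = v" by (rule unique)
    with 3 have "v \<in> internal p" unfolding mem_internal_iff by (intro exI[of _ 1]) simp
    with avoid vX show False by blast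
  qed
qed

lemma total_mv_set_insert_simplicial_set:
  assumes c: "connected_graph V E" and vV: "v \<in> V" and vP: "v \<notin> P_set V E"
  shows "total_mv_set V E (insert v (simplicial_set V E))"
proof (rule total_mv_setI[OF c])
  have g: "graph V E" using c by (simp add: connected_graph_def)
  have S: "internal q \<inter> simplicial_set V E = {}" if "shortest_path V E q x y" for q x y
    using simplicial_not_internal[OF g that] by (auto simp: simplicial_set_def)
  show "insert v (simplicial_set V E) \<subseteq> V" using vV by (auto simp: simplicial_set_def)
  fix p x y assume sp: "shortest_path V E p x y"
  show "\<exists>q. shortest_path V E q x y \<and> internal q \<inter> insert v (simplicial_set V E) = {}"
  proof (cases "v \<in> internal p")
    case False
    then show ?thesis using S[OF sp] sp by blast
  next
    case True
    then obtain i where i: "Suc (Suc i) < length p" "p ! Suc i = v"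
      and nbrs: "E (p ! i) v" "E v (p ! Suc (Suc i))"
        "p ! i \<noteq> p ! Suc (Suc i)" "\<not> E (p ! i) (p ! Suc (Suc i))"
      using shortest_path_internal_vertex[OF sp] by metis
    let ?a = "p ! i" and ?b = "p ! Suc (Suc i)"
    have ab: "?a \<in> V" "?b \<in> V" "v \<in> closed_nbh V E ?a \<inter> closed_nbh V E ?b"
      using g nbrs unfolding graph_def closed_nbh_def by blast+
    with vP vV nbrs(3) obtain c where "c \<in> closed_nbh V E ?a \<inter> closed_nbh V E ?b" "c \<noteq> v"
      unfolding P_set_def by blast
    with nbrs(3,4) g have c: "c \<in> V" "E ?a c" "E c ?b" "c \<noteq> v"
      unfolding closed_nbh_def graph_def by auto
    let ?q = "p[Suc i := c]"
    have spq: "shortest_path V E ?q x y" using shortest_path_update[OF sp i(1) c(1-3)] .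
    have "v \<notin> set ?q"
      using shortest_path_distinct[OF sp] i c(4)
      by (auto simp: in_set_conv_nth nth_list_update nth_eq_iff_index_eq split: if_splits)
    then have "v \<notin> internal ?q"
      unfolding internal_def by (metis in_set_butlastD list.sel(2) list.set_sel(2))
    then show ?thesis using S[OF spq] spq by blast
  qed
qed

lemma finite_total_mv_sets:
  assumes "graph V E"
  shows "finite {X. total_mv_set V E X}"
proof (rule finite_subset)
  show "{X. total_mv_set V E X} \<subseteq> Pow V" by (auto simp: total_mv_set_def)
  show "finite (Pow V)" using assms by (simp add: graph_def)
qed

lemma card_le_mu_t:
  assumes "graph V E" "total_mv_set V E X"
  shows "card X \<le> mu_t V E"
  unfolding mu_t_def using finite_total_mv_sets[OF assms(1)] assms(2) by (simp add: Max_ge)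

lemma mu_t_set_exists:
  assumes c: "connected_graph V E"
  obtains X where "mu_t_set V E X"
proof -
  have g: "graph V E" using c by (simp add: connected_graph_def)
  have "total_mv_set V E {}" using c by (rule total_mv_setI) auto
  then have "mu_t V E \<in> card ` {X. total_mv_set V E X}"
    unfolding mu_t_def using finite_total_mv_sets[OF g] by (intro Max_in) auto
  then show ?thesis using that unfolding mu_t_set_def by auto
qed

lemma total_mv_set_subset_Diff_P_set:
  assumes "connected_graph V E" "total_mv_set V E X"
  shows "X \<subseteq> V - P_set V E"
  using assms P_set_disjoint_total_mv_set[OF assms] by (auto simp: total_mv_set_def)

lemma Diff_P_set_subset_simplicial_set:
  assumes c: "connected_graph V E" and mu: "mu_t V E = card (simplicial_set V E)"
  shows "V - P_set V E \<subseteq> simplicial_set V E"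
proof
  fix v assume v: "v \<in> V - P_set V E"
  have g: "graph V E" using c by (simp add: connected_graph_def)
  have "card (insert v (simplicial_set V E)) \<le> card (simplicial_set V E)"
    using card_le_mu_t[OF g total_mv_set_insert_simplicial_set[OF c]] v mu by auto
  moreover have "finite (simplicial_set V E)" using g by (simp add: simplicial_set_def graph_def)
  ultimately show "v \<in> simplicial_set V E" by (simp add: card_insert_if split: if_splits)
qed

theorem proposition3p3:
  fixes V :: "'a set" and E :: "'a \<Rightarrow> 'a \<Rightarrow> bool"
  assumes "connected_graph V E"
  shows "mu_t V E \<ge> card (simplicial_set V E)
    \<and> (mu_t V E = card (simplicial_set V E) \<longrightarrow> mu_t V E = card V - card (P_set V E))
    \<and> (mu_t V E = card V - card (P_set V E) \<longrightarrow> mu_t V E = card (core_set V E))"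
proof -
  let ?S = "simplicial_set V E" and ?R = "V - P_set V E"
  have g: "graph V E" using assms by (simp add: connected_graph_def)
  have fin: "finite V" using g by (simp add: graph_def)
  have card_R: "card ?R = card V - card (P_set V E)"
    using fin by (simp add: card_Diff_subset P_set_def)
  have S: "total_mv_set V E ?S" using total_mv_set_simplicial_set[OF assms] .
  have part2: "mu_t V E = card ?S \<longrightarrow> ?S = ?R"
    using Diff_P_set_subset_simplicial_set[OF assms]
      total_mv_set_subset_Diff_P_set[OF assms S] by blast
  have unique: "X = ?R" if "mu_t V E = card ?R" "mu_t_set V E X" for X
    using that total_mv_set_subset_Diff_P_set[OF assms] fin
    by (intro card_subset_eq) (auto simp: mu_t_set_def)
  obtain X0 where "mu_t_set V E X0" using mu_t_set_exists[OF assms] .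
  then have "mu_t V E = card ?R \<longrightarrow> core_set V E = ?R"
    using unique unfolding core_set_def by blast
  then show ?thesis using card_le_mu_t[OF g S] part2 card_R by auto
qed

end
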